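(* Let $N\ge1$, $r_1,\dots,r_N$ real, $(\mu_{ij})$ an $N\times N$ real matrix and $\Psi_1,\dots,\Psi_N:\mathbb{R}^N\to\mathbb{R}$ such that: $r_i>0$; $(\mu_{ij})$ is nonnegative, symmetric and irreducible; each $\Psi_i$ is locally Lipschitz, $\Psi_i(0)=0$, monotone increasing for the componentwise order; for each $i$ there exist positive $R_i,k_i,c_i$ with $c_i(\sum_jv_j)^{k_i}\le\Psi_i(v)$ for all $v\in[0,\infty)^N$ with $\sum_j|v_j|\ge R_i$; and $\sum_{j=1}^N\mu_{ij}\le r_i/2$ for all $i$. Let $R=\mathrm{diag}(r_1,\dots,r_N)$ and let $M$ be the matrix with $M_{ij}=\mu_{ij}$ for $i\ne j$ and $M_{ii}=\mu_{ii}-\sum_{j=1}^N\mu_{ij}$. For $s\in[0,1]$ let $\Psi_i^s=s\Psi_i+(1-s)\Psi_1$ and $\Xi^s(V)=\mathrm{diag}(\Psi^s_1(V),\dots,\Psi^s_N(V))$. Let $V\in[0,\infty)^N$ be a nonnegative solution of $$(R+M)V=\Xi^s(V)V.$$ Then either $V\equiv0$ or $V_i>0$ for all $i$; and there exist constants $\bar c_1,\bar C_1>0$ independent of $s$ (and of $V$) such that, in the latter case, $\bar c_1\le\sum_iV_i\le\bar C_1$. *)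

theory Defs
  imports "HOL-Analysis.Analysis"
begin

text \<open>Irreducible square matrix: there is no proper nonempty set of indices I
  such that all entries A i j with i in I and j outside I vanish
  (equivalently, A is not permutation-similar to a block triangular matrix).\<close>
definition irreducible_mat :: "real^'n^'n \<Rightarrow> bool" where
  "irreducible_mat A \<longleftrightarrow>
     (\<forall>I. I \<noteq> {} \<and> I \<noteq> UNIV \<longrightarrow> (\<exists>i\<in>I. \<exists>j. j \<notin> I \<and> A$i$j \<noteq> 0))"

definition locally_lipschitz :: "(real^'n \<Rightarrow> real) \<Rightarrow> bool" where
  "locally_lipschitz f \<longleftrightarrow> (\<forall>x. \<exists>e>0. \<exists>L. L-lipschitz_on (ball x e) f)"

definition diag_mat :: "real^'n \<Rightarrow> real^'n^'n" where
  "diag_mat d = (\<chi> i j. if i = j then d$i else 0)"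

definition M_mat :: "real^'n^'n \<Rightarrow> real^'n^'n" where
  "M_mat mu = (\<chi> i j. if i = j then mu$i$i - (\<Sum>k\<in>UNIV. mu$i$k) else mu$i$j)"

text \<open>Psi^s_i = s Psi_i + (1-s) Psi_1, where i1 is the distinguished index "1".\<close>
definition Psi_s :: "('n \<Rightarrow> real^'n \<Rightarrow> real) \<Rightarrow> 'n \<Rightarrow> real \<Rightarrow> 'n \<Rightarrow> real^'n \<Rightarrow> real" where
  "Psi_s Psi i1 s i v = s * Psi i v + (1 - s) * Psi i1 v"

definition Xi_s :: "('n \<Rightarrow> real^'n \<Rightarrow> real) \<Rightarrow> 'n \<Rightarrow> real \<Rightarrow> real^'n \<Rightarrow> real^'n^'n" where
  "Xi_s Psi i1 s V = diag_mat (\<chi> i. Psi_s Psi i1 s i V)"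

end

theory Submission
  imports Defs
begin

text \<open>Positivity: at a zero component i of V the i-th equation forces (mu V)_i = 0, so every
  j with mu_ij > 0 is a zero component too; irreducibility spreads this to all indices.
  Lower bound: the equation in the distinguished row, where Psi^s_1 = Psi_1 for every s, gives
  Psi_1(V) \<ge> r_1/2 because the row sums of mu are at most r_1/2, while Psi_1 is Lipschitz near 0
  with Psi_1(0) = 0. Upper bound: by symmetry of mu the coupling terms cancel after summing the
  equations, so \<Sum>_i Psi^s_i(V) V_i = \<Sum>_i r_i V_i; the growth condition makes every Psi^s_i(V)
  exceed max_i r_i once \<Sum>_i V_i is large.\<close>

lemma diag_mat_plus_M_mat_mult_component:
  fixes r :: "real^'n" and mu :: "real^'n^'n"
  shows "((diag_mat r + M_mat mu) *v V)$i
     = r$i * V$i + (mu *v V)$i - (\<Sum>k\<in>UNIV. mu$i$k) * V$i"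
proof -
  have entry: "(diag_mat r + M_mat mu)$i$j * V$j
     = (if i = j then (r$i - (\<Sum>k\<in>UNIV. mu$i$k)) * V$i else 0) + mu$i$j * V$j" for j
    by (auto simp: diag_mat_def M_mat_def algebra_simps)
  have "((diag_mat r + M_mat mu) *v V)$i
     = (\<Sum>j\<in>UNIV. (if i = j then (r$i - (\<Sum>k\<in>UNIV. mu$i$k)) * V$i else 0) + mu$i$j * V$j)"
    by (simp only: matrix_vector_mult_def vec_lambda_beta entry)
  then show ?thesis
    by (simp add: sum.distrib matrix_vector_mult_def algebra_simps)
qed

lemma Xi_s_mult_component: "(Xi_s Psi i1 s V *v V)$i = Psi_s Psi i1 s i V * V$i"
proof -
  have "(Xi_s Psi i1 s V)$i$j * V$j = (if i = j then Psi_s Psi i1 s i V * V$i else 0)" for j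
    by (auto simp: Xi_s_def diag_mat_def)
  then show ?thesis by (simp add: matrix_vector_mult_def)
qed

lemma Psi_s_base: "Psi_s Psi i1 s i1 v = Psi i1 v"
  by (simp add: Psi_s_def algebra_simps)

lemma steady_state_component:
  fixes r :: "real^'n" and mu :: "real^'n^'n"
  assumes "(diag_mat r + M_mat mu) *v V = Xi_s Psi i1 s V *v V"
  shows "Psi_s Psi i1 s i V * V$i = r$i * V$i + (mu *v V)$i - (\<Sum>k\<in>UNIV. mu$i$k) * V$i"
  using arg_cong[OF assms, of "\<lambda>x. x$i"]
  by (simp add: diag_mat_plus_M_mat_mult_component Xi_s_mult_component)

lemma irreducible_nonneg_zero_or_positive:
  fixes A :: "real^'n^'n"
  assumes irred: "irreducible_mat A" and A_nonneg: "\<forall>i j. A$i$j \<ge> 0"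
    and V_nonneg: "\<forall>i. V$i \<ge> 0" and zeros_closed: "\<forall>i. V$i = 0 \<longrightarrow> (A *v V)$i = 0"
  shows "V = 0 \<or> (\<forall>i. V$i > 0)"
proof -
  define I where "I = {i. V$i = 0}"
  have "I = {} \<or> I = UNIV"
  proof (rule ccontr)
    assume "\<not> (I = {} \<or> I = UNIV)"
    then obtain i j where i: "i \<in> I" and j: "j \<notin> I" and Aij: "A$i$j \<noteq> 0"
      using irred unfolding irreducible_mat_def by blast
    have "(\<Sum>k\<in>UNIV. A$i$k * V$k) = 0"
      using zeros_closed i unfolding I_def by (simp add: matrix_vector_mult_def)
    then have "A$i$j * V$j = 0"
      using A_nonneg V_nonneg by (subst (asm) sum_nonneg_eq_0_iff) auto
    with Aij j show False unfolding I_def by simp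
  qed
  then show ?thesis
    using V_nonneg unfolding I_def by (auto simp: vec_eq_iff order_le_less)
qed

lemma sum_matrix_vector_mult_symmetric:
  fixes A :: "real^'n^'n"
  assumes "\<forall>i j. A$i$j = A$j$i"
  shows "(\<Sum>i\<in>UNIV. (A *v V)$i) = (\<Sum>i\<in>UNIV. (\<Sum>k\<in>UNIV. A$i$k) * V$i)"
proof -
  have "(\<Sum>i\<in>UNIV. (A *v V)$i) = (\<Sum>i\<in>UNIV. \<Sum>j\<in>UNIV. A$i$j * V$j)"
    by (simp add: matrix_vector_mult_def)
  also have "\<dots> = (\<Sum>j\<in>UNIV. \<Sum>i\<in>UNIV. A$i$j * V$j)"
    by (rule sum.swap)
  also have "\<dots> = (\<Sum>j\<in>UNIV. (\<Sum>i\<in>UNIV. A$j$i) * V$j)"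
    using assms by (simp add: sum_distrib_right)
  finally show ?thesis .
qed

lemma locally_lipschitz_vanishing_norm_lower_bound:
  assumes "locally_lipschitz f" "f 0 = 0" "a > 0"
  shows "\<exists>c>0. \<forall>v. a \<le> f v \<longrightarrow> c \<le> norm v"
proof -
  obtain e L where e: "e > 0" and lip: "L-lipschitz_on (ball 0 e) f"
    using assms(1) unfolding locally_lipschitz_def by blast
  have L: "L \<ge> 0" using lip by (simp add: lipschitz_on_def)
  define c where "c = min e (a / (L + 1))"
  have "c \<le> norm v" if "a \<le> f v" for v
  proof (rule ccontr)
    assume "\<not> c \<le> norm v"
    then have small: "norm v < c" by simp
    then have "dist (f v) (f 0) \<le> L * dist v 0"
      using lipschitz_onD[OF lip, of v 0] e unfolding c_def by simp
    then have "f v \<le> L * norm v" using assms(2) by (simp add: dist_norm)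
    also have "\<dots> \<le> L * (a / (L + 1))"
      using small L unfolding c_def by (intro mult_left_mono) auto
    also have "\<dots> < a" using L assms(3) by (simp add: field_simps)
    finally show False using that by simp
  qed
  moreover have "c > 0" using e L assms(3) unfolding c_def by simp
  ultimately show ?thesis by blast
qed

lemma powr_growth_exceeds:
  fixes f :: "real^'n \<Rightarrow> real"
  assumes "\<exists>R k c. R > 0 \<and> k > 0 \<and> c > 0 \<and>
        (\<forall>v. (\<forall>j. v$j \<ge> 0) \<and> (\<Sum>j\<in>UNIV. \<bar>v$j\<bar>) \<ge> R \<longrightarrow>
             c * (\<Sum>j\<in>UNIV. v$j) powr k \<le> f v)"
  shows "\<exists>T. \<forall>v. (\<forall>j. v$j \<ge> 0) \<and> T < (\<Sum>j\<in>UNIV. v$j) \<longrightarrow> B < f v"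
proof -
  obtain R k c where R: "R > 0" and k: "k > 0" and c: "c > 0"
    and growth: "\<And>v. (\<forall>j. v$j \<ge> 0) \<Longrightarrow> (\<Sum>j\<in>UNIV. \<bar>v$j\<bar>) \<ge> R \<Longrightarrow>
             c * (\<Sum>j\<in>UNIV. v$j) powr k \<le> f v"
    using assms by blast
  define T where "T = R + (\<bar>B\<bar> / c) powr (1 / k)"
  have "B < f v" if v: "\<forall>j. v$j \<ge> 0" and big: "T < (\<Sum>j\<in>UNIV. v$j)" for v
  proof -
    define S where "S = (\<Sum>j\<in>UNIV. v$j)"
    have "(\<Sum>j\<in>UNIV. \<bar>v$j\<bar>) = S" using v unfolding S_def by simp
    moreover have S_ge: "S \<ge> R" "S > (\<bar>B\<bar> / c) powr (1 / k)"
      using big R powr_ge_zero[of "\<bar>B\<bar> / c" "1 / k"] unfolding T_def S_def by linarith+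
    ultimately have "c * S powr k \<le> f v" using growth v unfolding S_def by simp
    have "\<bar>B\<bar> / c = ((\<bar>B\<bar> / c) powr (1 / k)) powr k"
      using k c by (simp add: powr_powr)
    also have "\<dots> < S powr k"
      using S_ge k by (intro powr_less_mono2) auto
    finally have "\<bar>B\<bar> < c * S powr k" using c by (simp add: field_simps)
    with \<open>c * S powr k \<le> f v\<close> show ?thesis by linarith
  qed
  then show ?thesis by blast
qed

lemma steady_state_zero_or_positive:
  fixes r :: "real^'n" and mu :: "real^'n^'n"
  assumes mu_nonneg: "\<forall>i j. mu$i$j \<ge> 0" and mu_irred: "irreducible_mat mu"
    and V_nonneg: "\<forall>i. V$i \<ge> 0"
    and steady: "(diag_mat r + M_mat mu) *v V = Xi_s Psi i1 s V *v V"
  shows "V = 0 \<or> (\<forall>i. V$i > 0)"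
proof (rule irreducible_nonneg_zero_or_positive[OF mu_irred mu_nonneg V_nonneg])
  show "\<forall>i. V$i = 0 \<longrightarrow> (mu *v V)$i = 0"
  proof (intro allI impI)
    fix i assume "V$i = 0"
    then show "(mu *v V)$i = 0" using steady_state_component[OF steady, of i] by simp
  qed
qed

lemma steady_state_sum_lower_bound:
  fixes r :: "real^'n" and mu :: "real^'n^'n"
  assumes r_pos: "\<forall>i. r$i > 0" and mu_nonneg: "\<forall>i j. mu$i$j \<ge> 0"
    and lip: "locally_lipschitz (Psi i1)" and zero: "Psi i1 0 = 0"
    and mu_row: "\<forall>i. (\<Sum>j\<in>UNIV. mu$i$j) \<le> r$i / 2"
  shows "\<exists>c>0. \<forall>s V. (\<forall>i. V$i > 0) \<and> (diag_mat r + M_mat mu) *v V = Xi_s Psi i1 s V *v V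
           \<longrightarrow> c \<le> (\<Sum>i\<in>UNIV. V$i)"
proof -
  obtain c where c: "c > 0" and norm_bound: "\<And>v. r$i1 / 2 \<le> Psi i1 v \<Longrightarrow> c \<le> norm v"
    using locally_lipschitz_vanishing_norm_lower_bound[OF lip zero, of "r$i1 / 2"] r_pos by auto
  have "c \<le> (\<Sum>i\<in>UNIV. V$i)"
    if V_pos: "\<forall>i. V$i > 0" and steady: "(diag_mat r + M_mat mu) *v V = Xi_s Psi i1 s V *v V"
    for s V
  proof -
    have "Psi i1 V * V$i1 = r$i1 * V$i1 + (mu *v V)$i1 - (\<Sum>k\<in>UNIV. mu$i1$k) * V$i1"
      using steady_state_component[OF steady, of i1] by (simp add: Psi_s_base)
    moreover have "(mu *v V)$i1 \<ge> 0"
      using mu_nonneg V_pos by (simp add: matrix_vector_mult_def less_imp_le sum_nonneg)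
    moreover have "(\<Sum>k\<in>UNIV. mu$i1$k) * V$i1 \<le> r$i1 / 2 * V$i1"
      using mu_row V_pos by (simp add: less_imp_le mult_right_mono)
    ultimately have "r$i1 / 2 * V$i1 \<le> Psi i1 V * V$i1" by linarith
    then have "c \<le> norm V" using V_pos norm_bound by simp
    also have "\<dots> \<le> (\<Sum>i\<in>UNIV. V$i)"
      using norm_le_l1_cart[of V] V_pos by (simp add: less_imp_le)
    finally show ?thesis .
  qed
  with c show ?thesis by blast
qed

lemma steady_state_sum_upper_bound:
  fixes r :: "real^'n" and mu :: "real^'n^'n"
  assumes mu_sym: "\<forall>i j. mu$i$j = mu$j$i"
    and growth: "\<forall>i. \<exists>Ri ki ci. Ri > 0 \<and> ki > 0 \<and> ci > 0 \<and>
        (\<forall>v. (\<forall>j. v$j \<ge> 0) \<and> (\<Sum>j\<in>UNIV. \<bar>v$j\<bar>) \<ge> Ri \<longrightarrow>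
             ci * (\<Sum>j\<in>UNIV. v$j) powr ki \<le> Psi i v)"
  shows "\<exists>C>0. \<forall>s\<in>{0..1}. \<forall>V. (\<forall>i. V$i > 0) \<and> (diag_mat r + M_mat mu) *v V = Xi_s Psi i1 s V *v V
           \<longrightarrow> (\<Sum>i\<in>UNIV. V$i) \<le> C"
proof -
  define B where "B = Max (range (\<lambda>i. r$i))"
  obtain T where T: "\<And>i v. (\<forall>j. v$j \<ge> 0) \<Longrightarrow> T i < (\<Sum>j\<in>UNIV. v$j) \<Longrightarrow> B < Psi i v"
    using powr_growth_exceeds[of "Psi _" B] growth by metis
  define C where "C = max 1 (Max (range T))"
  have "(\<Sum>i\<in>UNIV. V$i) \<le> C"
    if s: "s \<in> {0..1}" and V_pos: "\<forall>i. V$i > 0"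
      and steady: "(diag_mat r + M_mat mu) *v V = Xi_s Psi i1 s V *v V" for s V
  proof (rule ccontr)
    assume "\<not> (\<Sum>i\<in>UNIV. V$i) \<le> C"
    then have "T i < (\<Sum>i\<in>UNIV. V$i)" for i
      unfolding C_def by (smt (verit) Max_ge finite UNIV_I finite_imageI image_eqI)
    then have Psi_big: "B < Psi i V" for i
      using T V_pos by (simp add: less_imp_le)
    have Psi_s_big: "B < Psi_s Psi i1 s i V" for i
    proof -
      have "s * B + (1 - s) * B < s * Psi i V + (1 - s) * Psi i1 V"
      proof (cases "s = 0")
        case False
        with s have "s * B < s * Psi i V" using Psi_big[of i] by simp
        moreover have "(1 - s) * B \<le> (1 - s) * Psi i1 V"
          using s Psi_big[of i1] by (intro mult_left_mono) auto
        ultimately show ?thesis by linarith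
      qed (use Psi_big[of i1] in simp)
      then show ?thesis by (simp add: Psi_s_def algebra_simps)
    qed
    have "(\<Sum>i\<in>UNIV. Psi_s Psi i1 s i V * V$i) = (\<Sum>i\<in>UNIV. r$i * V$i)"
      using steady_state_component[OF steady] sum_matrix_vector_mult_symmetric[OF mu_sym]
      by (simp add: sum.distrib sum_subtractf)
    also have "\<dots> \<le> (\<Sum>i\<in>UNIV. B * V$i)"
      using V_pos unfolding B_def by (intro sum_mono mult_right_mono) (auto simp: less_imp_le)
    also have "\<dots> < (\<Sum>i\<in>UNIV. Psi_s Psi i1 s i V * V$i)"
      using Psi_s_big V_pos by (intro sum_strict_mono) auto
    finally show False by simp
  qed
  moreover have "C > 0" unfolding C_def by simp
  ultimately show ?thesis by blast
qed

theorem lemma6p1: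
  fixes r :: "real^'n" and mu :: "real^'n^'n"
    and Psi :: "'n \<Rightarrow> real^'n \<Rightarrow> real" and i1 :: 'n
  assumes r_pos: "\<forall>i. r$i > 0"
    and mu_nonneg: "\<forall>i j. mu$i$j \<ge> 0"
    and mu_sym: "\<forall>i j. mu$i$j = mu$j$i"
    and mu_irred: "irreducible_mat mu"
    and Psi_lip: "\<forall>i. locally_lipschitz (Psi i)"
    and Psi_zero: "\<forall>i. Psi i 0 = 0"
    and Psi_mono: "\<forall>i u v. (\<forall>j. u$j \<le> v$j) \<longrightarrow> Psi i u \<le> Psi i v"
    and Psi_growth: "\<forall>i. \<exists>Ri ki ci. Ri > 0 \<and> ki > 0 \<and> ci > 0 \<and>
        (\<forall>v. (\<forall>j. v$j \<ge> 0) \<and> (\<Sum>j\<in>UNIV. \<bar>v$j\<bar>) \<ge> Ri \<longrightarrow>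
             ci * (\<Sum>j\<in>UNIV. v$j) powr ki \<le> Psi i v)"
    and mu_row: "\<forall>i. (\<Sum>j\<in>UNIV. mu$i$j) \<le> r$i / 2"
  shows "(\<forall>s\<in>{0..1}. \<forall>V. (\<forall>i. V$i \<ge> 0) \<and>
            (diag_mat r + M_mat mu) *v V = Xi_s Psi i1 s V *v V
          \<longrightarrow> V = 0 \<or> (\<forall>i. V$i > 0))
       \<and> (\<exists>c1 C1. c1 > 0 \<and> C1 > 0 \<and>
           (\<forall>s\<in>{0..1}. \<forall>V. (\<forall>i. V$i \<ge> 0) \<and>
              (diag_mat r + M_mat mu) *v V = Xi_s Psi i1 s V *v V \<and> (\<forall>i. V$i > 0)
            \<longrightarrow> c1 \<le> (\<Sum>i\<in>UNIV. V$i) \<and> (\<Sum>i\<in>UNIV. V$i) \<le> C1))"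
proof -
  obtain c1 where "c1 > 0" and lower: "\<forall>s V. (\<forall>i. V$i > 0) \<and>
      (diag_mat r + M_mat mu) *v V = Xi_s Psi i1 s V *v V \<longrightarrow> c1 \<le> (\<Sum>i\<in>UNIV. V$i)"
    using steady_state_sum_lower_bound[OF r_pos mu_nonneg _ _ mu_row] Psi_lip Psi_zero by blast
  obtain C1 where "C1 > 0" and upper: "\<forall>s\<in>{0..1}. \<forall>V. (\<forall>i. V$i > 0) \<and>
      (diag_mat r + M_mat mu) *v V = Xi_s Psi i1 s V *v V \<longrightarrow> (\<Sum>i\<in>UNIV. V$i) \<le> C1"
    using steady_state_sum_upper_bound[OF mu_sym Psi_growth] by blast
  show ?thesis
  proof (intro conjI exI ballI allI impI)
    show "V = 0 \<or> (\<forall>i. V$i > 0)"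
      if "(\<forall>i. V$i \<ge> 0) \<and> (diag_mat r + M_mat mu) *v V = Xi_s Psi i1 s V *v V" for s V
      using steady_state_zero_or_positive[OF mu_nonneg mu_irred] that by blast
    show "c1 \<le> (\<Sum>i\<in>UNIV. V$i)" "(\<Sum>i\<in>UNIV. V$i) \<le> C1"
      if "s \<in> {0..1}" and "(\<forall>i. V$i \<ge> 0) \<and> (diag_mat r + M_mat mu) *v V = Xi_s Psi i1 s V *v V
          \<and> (\<forall>i. V$i > 0)" for s V
      using lower upper that by blast+
  qed fact+
qed

end
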